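(* Let $A$ be a positive operator on a real or complex Hilbert space which has a projection decomposition. Then either $A$ is a self-adjoint projection or $\|A\|>1$.
   Context: A positive operator $A$ has a projection decomposition if $A$ can be written as the sum of a finite or infinite sequence of (not necessarily mutually orthogonal) self-adjoint projections, with the series converging in the strong operator topology. *)

theory Defs
  imports "HOL-Analysis.Analysis"
begin

definition self_adjoint :: "('a::real_inner \<Rightarrow> 'a) \<Rightarrow> bool" where
  "self_adjoint T \<longleftrightarrow> (\<forall>x y. inner (T x) y = inner x (T y))"

definition sa_projection :: "('a::real_inner \<Rightarrow> 'a) \<Rightarrow> bool" where
  "sa_projection P \<longleftrightarrow> bounded_linear P \<and> P \<circ> P = P \<and> self_adjoint P"

definition positive_op :: "('a::real_inner \<Rightarrow> 'a) \<Rightarrow> bool" where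
  "positive_op A \<longleftrightarrow> bounded_linear A \<and> self_adjoint A \<and> (\<forall>x. 0 \<le> inner (A x) x)"

text \<open>A is the sum of a finite or infinite sequence of operators satisfying isP,
the series converging in the strong operator topology.\<close>
definition decomposition_by :: "(('a::real_normed_vector \<Rightarrow> 'a) \<Rightarrow> bool) \<Rightarrow> ('a \<Rightarrow> 'a) \<Rightarrow> bool" where
  "decomposition_by isP A \<longleftrightarrow>
     (\<exists>P :: nat \<Rightarrow> 'a \<Rightarrow> 'a. (\<forall>n. isP (P n)) \<and>
        ((\<exists>N. \<forall>x. A x = (\<Sum>n<N. P n x)) \<or> (\<forall>x. (\<lambda>n. P n x) sums (A x))))"

definition has_projection_decomposition :: "('a::real_inner \<Rightarrow> 'a) \<Rightarrow> bool" where
  "has_projection_decomposition A \<longleftrightarrow> decomposition_by sa_projection A"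

text \<open>Complex Hilbert spaces, modelled as their realification: a real Hilbert space
with a complex structure J (multiplication by i), an orthogonal map with J o J = -id.
The complex inner product is recovered as below (linear in the first argument).\<close>
definition complex_structure :: "('a::real_inner \<Rightarrow> 'a) \<Rightarrow> bool" where
  "complex_structure J \<longleftrightarrow> bounded_linear J \<and> (\<forall>x. J (J x) = - x) \<and>
     (\<forall>x y. inner (J x) (J y) = inner x y)"

definition cinner :: "('a::real_inner \<Rightarrow> 'a) \<Rightarrow> 'a \<Rightarrow> 'a \<Rightarrow> complex" where
  "cinner J x y = Complex (inner x y) (inner x (J y))"

definition clinear_op :: "('a::real_inner \<Rightarrow> 'a) \<Rightarrow> ('a \<Rightarrow> 'a) \<Rightarrow> bool" where
  "clinear_op J T \<longleftrightarrow> bounded_linear T \<and> (\<forall>x. T (J x) = J (T x))"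

definition c_sa_projection :: "('a::real_inner \<Rightarrow> 'a) \<Rightarrow> ('a \<Rightarrow> 'a) \<Rightarrow> bool" where
  "c_sa_projection J P \<longleftrightarrow> clinear_op J P \<and> P \<circ> P = P \<and>
     (\<forall>x y. cinner J (P x) y = cinner J x (P y))"

definition c_positive_op :: "('a::real_inner \<Rightarrow> 'a) \<Rightarrow> ('a \<Rightarrow> 'a) \<Rightarrow> bool" where
  "c_positive_op J A \<longleftrightarrow> clinear_op J A \<and>
     (\<forall>x. Im (cinner J (A x) x) = 0 \<and> 0 \<le> Re (cinner J (A x) x))"

definition c_has_projection_decomposition :: "('a::real_inner \<Rightarrow> 'a) \<Rightarrow> ('a \<Rightarrow> 'a) \<Rightarrow> bool" where
  "c_has_projection_decomposition J A \<longleftrightarrow> decomposition_by (c_sa_projection J) A"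

end

theory Submission
  imports Defs
begin

text \<open>
  Suppose \<open>A = \<Sum>\<^sub>n P\<^sub>n\<close> strongly with self-adjoint projections \<open>P\<^sub>n\<close> and \<open>\<parallel>A\<parallel> \<le> 1\<close>.
  Since \<open>\<langle>P\<^sub>n x, x\<rangle> = \<parallel>P\<^sub>n x\<parallel>\<^sup>2 \<ge> 0\<close>, a vector \<open>x\<close> in the range of \<open>P\<^sub>m\<close> satisfies
  \<open>\<parallel>x\<parallel>\<^sup>2 + \<parallel>P\<^sub>n x\<parallel>\<^sup>2 \<le> \<langle>A x, x\<rangle> \<le> \<parallel>x\<parallel>\<^sup>2\<close> for every \<open>n \<noteq> m\<close>, so the ranges of the \<open>P\<^sub>n\<close> are
  mutually orthogonal. Hence \<open>A\<close> is the identity on each range, \<open>A\<^sup>2 = \<Sum>\<^sub>n A P\<^sub>n = \<Sum>\<^sub>n P\<^sub>n = A\<close>,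
  and \<open>A\<close> is self-adjoint as a strong limit of self-adjoint operators. The complex case
  reduces to the real one, since a complex-linear real projection is a complex projection.
  Positivity of \<open>A\<close> is used only through its boundedness.
\<close>

lemma sa_projection_idem:
  assumes "sa_projection P"
  shows "P (P x) = P x"
  using assms unfolding sa_projection_def by (metis comp_apply)

lemma sa_projection_inner_self:
  assumes "sa_projection P"
  shows "inner (P x) x = norm (P x) ^ 2"
proof -
  have "inner (P x) x = inner (P (P x)) x"
    using sa_projection_idem[OF assms] by simp
  also have "\<dots> = inner (P x) (P x)"
    using assms unfolding sa_projection_def self_adjoint_def by blast
  finally show ?thesis
    by (simp add: power2_norm_eq_inner)
qed

lemma sa_projection_zero: "sa_projection (\<lambda>x::'a::real_inner. 0)"
  unfolding sa_projection_def self_adjoint_def by (simp add: bounded_linear_zero)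

lemma decomposition_by_sums:
  assumes "decomposition_by isP A" and "isP (\<lambda>x. 0)"
  obtains P where "\<And>n. isP (P n)" and "\<And>x. (\<lambda>n. P n x) sums A x"
proof -
  obtain P where P: "\<And>n. isP (P n)"
    and finite_or_sums: "(\<exists>N. \<forall>x. A x = (\<Sum>n<N. P n x)) \<or> (\<forall>x. (\<lambda>n. P n x) sums A x)"
    using assms(1) unfolding decomposition_by_def by blast
  show thesis
  proof (cases "\<forall>x. (\<lambda>n. P n x) sums A x")
    case True
    with P that show thesis by blast
  next
    case False
    then obtain N where N: "\<And>x. A x = (\<Sum>n<N. P n x)"
      using finite_or_sums by blast
    define Q where "Q n = (if n < N then P n else (\<lambda>x. 0))" for n
    have "isP (Q n)" for n
      using P assms(2) by (simp add: Q_def)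
    moreover have "(\<lambda>n. Q n x) sums A x" for x
    proof -
      have "(\<lambda>n. Q n x) sums (\<Sum>n<N. Q n x)"
        by (rule sums_finite) (auto simp: Q_def)
      then show ?thesis
        by (simp add: N Q_def)
    qed
    ultimately show thesis by (rule that)
  qed
qed

lemma inner_apply_le_norm_square:
  assumes "bounded_linear A" and "onorm A \<le> 1"
  shows "inner (A x) x \<le> norm x ^ 2"
proof -
  have "inner (A x) x \<le> norm (A x) * norm x"
    by (rule norm_cauchy_schwarz)
  also have "\<dots> \<le> onorm A * norm x * norm x"
    using onorm[OF assms(1), of x] by (simp add: mult_right_mono)
  also have "\<dots> \<le> 1 * norm x * norm x"
    using assms(2) by (intro mult_right_mono) auto
  finally show ?thesis
    by (simp add: power2_eq_square)
qed

lemma projection_series_ranges_orthogonal: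
  fixes A :: "'a::real_inner \<Rightarrow> 'a"
  assumes P: "\<And>n. sa_projection (P n)"
    and sums: "\<And>x. (\<lambda>n. P n x) sums A x"
    and le: "\<And>x. inner (A x) x \<le> norm x ^ 2"
    and "P m x = x" and "n \<noteq> m"
  shows "P n x = 0"
proof -
  let ?a = "\<lambda>k. norm (P k x) ^ 2"
  have a_sums: "?a sums inner (A x) x"
    using bounded_linear.sums[OF bounded_linear_inner_left[of x] sums[of x]]
    by (simp add: sa_projection_inner_self[OF P])
  have "(\<Sum>k\<in>{m, n}. ?a k) \<le> (\<Sum>k<Suc (max m n). ?a k)"
    by (rule sum_mono2) auto
  also have "\<dots> \<le> suminf ?a"
    using a_sums by (intro sum_le_suminf) (auto simp: sums_iff)
  also have "\<dots> = inner (A x) x"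
    using a_sums by (rule sums_unique[symmetric])
  also have "\<dots> \<le> norm x ^ 2"
    by (rule le)
  finally have "norm x ^ 2 + norm (P n x) ^ 2 \<le> norm x ^ 2"
    using assms(4,5) by simp
  then show ?thesis
    by simp
qed

lemma projection_series_fixes_ranges:
  fixes A :: "'a::real_inner \<Rightarrow> 'a"
  assumes P: "\<And>n. sa_projection (P n)"
    and sums: "\<And>x. (\<lambda>n. P n x) sums A x"
    and le: "\<And>x. inner (A x) x \<le> norm x ^ 2"
  shows "A (P m y) = P m y"
proof -
  have idem: "P m (P m y) = P m y"
    using sa_projection_idem[OF P] .
  have "(\<lambda>n. P n (P m y)) = (\<lambda>n. if n = m then P m y else 0)"
    using projection_series_ranges_orthogonal[OF P sums le idem] idem by auto
  then have "(\<lambda>n. P n (P m y)) sums P m y"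
    using sums_single[of m "\<lambda>_. P m y"] by simp
  then show ?thesis
    using sums[of "P m y"] sums_unique2 by metis
qed

lemma projection_series_idem:
  fixes A :: "'a::real_inner \<Rightarrow> 'a"
  assumes P: "\<And>n. sa_projection (P n)"
    and sums: "\<And>x. (\<lambda>n. P n x) sums A x"
    and le: "\<And>x. inner (A x) x \<le> norm x ^ 2"
    and "bounded_linear A"
  shows "A (A x) = A x"
proof -
  have "(\<lambda>n. A (P n x)) sums A (A x)"
    using bounded_linear.sums[OF assms(4) sums] .
  then have "(\<lambda>n. P n x) sums A (A x)"
    by (simp add: projection_series_fixes_ranges[OF P sums le])
  then show ?thesis
    using sums[of x] sums_unique2 by metis
qed

lemma self_adjoint_sums:
  fixes A :: "'a::real_inner \<Rightarrow> 'a"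
  assumes "\<And>n. self_adjoint (T n)" and sums: "\<And>x. (\<lambda>n. T n x) sums A x"
  shows "self_adjoint A"
  unfolding self_adjoint_def
proof (intro allI)
  fix x y
  have "(\<lambda>n. inner (T n x) y) sums inner (A x) y"
    using bounded_linear.sums[OF bounded_linear_inner_left sums] by simp
  moreover have "(\<lambda>n. inner x (T n y)) sums inner x (A y)"
    using bounded_linear.sums[OF bounded_linear_inner_right sums] by simp
  moreover have "inner (T n x) y = inner x (T n y)" for n
    using assms(1) unfolding self_adjoint_def by blast
  ultimately show "inner (A x) y = inner x (A y)"
    using sums_unique2 by fastforce
qed

lemma projection_series_sa_projection:
  fixes A :: "'a::real_inner \<Rightarrow> 'a"
  assumes P: "\<And>n. sa_projection (P n)"
    and sums: "\<And>x. (\<lambda>n. P n x) sums A x"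
    and "bounded_linear A" and "onorm A \<le> 1"
  shows "sa_projection A"
proof -
  have le: "inner (A x) x \<le> norm x ^ 2" for x
    using inner_apply_le_norm_square[OF assms(3,4)] .
  have "self_adjoint (P n)" for n
    using P unfolding sa_projection_def by blast
  then show ?thesis
    unfolding sa_projection_def
    using assms(3) projection_series_idem[OF P sums le assms(3)] self_adjoint_sums[OF _ sums]
    by auto
qed

lemma c_sa_projection_imp_sa_projection:
  "c_sa_projection J P \<Longrightarrow> sa_projection P"
  unfolding c_sa_projection_def sa_projection_def clinear_op_def cinner_def self_adjoint_def
  by (metis complex.inject)

lemma c_sa_projection_zero:
  "bounded_linear J \<Longrightarrow> c_sa_projection J (\<lambda>x::'a::real_inner. 0)"
  unfolding c_sa_projection_def clinear_op_def cinner_def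
  by (simp add: bounded_linear_zero linear_simps(3))

lemma c_sa_projection_if_sa_projection:
  assumes "clinear_op J A" and "sa_projection A"
  shows "c_sa_projection J A"
proof -
  have "inner (A x) (J y) = inner x (J (A y))" for x y
    using assms unfolding sa_projection_def self_adjoint_def clinear_op_def by metis
  with assms show ?thesis
    unfolding c_sa_projection_def sa_projection_def self_adjoint_def cinner_def by simp
qed

theorem lemma9:
  shows "(\<forall>A :: 'a::{real_inner, complete_space} \<Rightarrow> 'a.
            positive_op A \<and> has_projection_decomposition A
            \<longrightarrow> sa_projection A \<or> onorm A > 1)
       \<and> (\<forall>(J :: 'b::{real_inner, complete_space} \<Rightarrow> 'b) A.
            complex_structure J \<and> c_positive_op J A \<and> c_has_projection_decomposition J A
            \<longrightarrow> c_sa_projection J A \<or> onorm A > 1)"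
proof (intro conjI allI impI)
  fix A :: "'a \<Rightarrow> 'a"
  assume A: "positive_op A \<and> has_projection_decomposition A"
  then obtain P where "\<And>n. sa_projection (P n)" and "\<And>x. (\<lambda>n. P n x) sums A x"
    unfolding has_projection_decomposition_def by (metis decomposition_by_sums sa_projection_zero)
  moreover have "bounded_linear A"
    using A unfolding positive_op_def by blast
  ultimately show "sa_projection A \<or> onorm A > 1"
    using projection_series_sa_projection by (metis not_less)
next
  fix J A :: "'b \<Rightarrow> 'b"
  assume JA: "complex_structure J \<and> c_positive_op J A \<and> c_has_projection_decomposition J A"
  then obtain P where "\<And>n. c_sa_projection J (P n)" and "\<And>x. (\<lambda>n. P n x) sums A x"
    unfolding c_has_projection_decomposition_def complex_structure_def
    by (metis decomposition_by_sums c_sa_projection_zero)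
  moreover have "clinear_op J A"
    using JA unfolding c_positive_op_def by blast
  ultimately show "c_sa_projection J A \<or> onorm A > 1"
    using projection_series_sa_projection c_sa_projection_imp_sa_projection
      c_sa_projection_if_sa_projection
    unfolding clinear_op_def by (metis not_less)
qed

end
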